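(* Let $\vec I^{\mathcal M}$ be the multipointed $d$-space with underlying space $[0,1]$, set of states $\{0,1\}$, execution paths from $0$ to $1$ exactly the nondecreasing surjective continuous maps $[0,1]\to[0,1]$ (the set $\mathcal M(1,1)$), and no other execution paths. Then the space \[ \mathbb P_{0,1}\vec I^{\mathcal M}=\mathrm{coeq}\big(\mathbb P^{top}_{0,1}\vec I^{\mathcal M}\times\mathcal G(1,1)\rightrightarrows\mathbb P^{top}_{0,1}\vec I^{\mathcal M}\big), \] where the two maps are $(c,\phi)\mapsto c$ and $(c,\phi)\mapsto c\circ\phi$, is not a singleton.
   Context: $\mathbf{Top}$: $\Delta$-generated spaces; $\mathbb P^{top}_{0,1}\vec I^{\mathcal M}\subset\mathbf{TOP}([0,1],[0,1])$ carries the $\Delta$-kelleyfication of the relative compact-open topology, and the coequalizer is taken in $\mathbf{Top}$. $\mathcal G(1,1)$ is the space of nondecreasing homeomorphisms of $[0,1]$. A multipointed $d$-space is a triple $(|X|,X^0,\mathbb P^{top}X)$ of a space, a set of states, and a set of continuous paths $[0,1]\to|X|$ between states, closed under precomposition with elements of $\mathcal G(1,1)$ and under normalized composition. *)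

theory Defs
  imports "HOL-Analysis.Analysis"
begin

text \<open>Maps are represented as real => real; only their values on [0,1] matter
  (see the relation below, which identifies maps agreeing on [0,1]).\<close>
definition M11 :: "(real \<Rightarrow> real) set" where
  "M11 = {c. continuous_on {0..1} c \<and> mono_on {0..1} c \<and> c ` {0..1} = {0..1}}"

definition G11 :: "(real \<Rightarrow> real) set" where
  "G11 = {\<phi>. mono_on {0..1} \<phi> \<and> (\<exists>\<psi>. homeomorphism {0..1} {0..1} \<phi> \<psi>)}"

text \<open>The pairs identified by the two parallel maps (c,phi) |-> c and (c,phi) |-> c o phi,
  with equality of paths meaning equality as maps on [0,1].\<close>
definition reparam_rel :: "((real \<Rightarrow> real) \<times> (real \<Rightarrow> real)) set" where
  "reparam_rel = {(c, d). c \<in> M11 \<and> d \<in> M11 \<and>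
      (\<exists>\<phi>\<in>G11. \<forall>t\<in>{0..1}. d t = c (\<phi> t))}"

text \<open>Underlying set of the coequalizer: quotient of M(1,1) by the equivalence
  relation generated by reparam_rel.\<close>
definition P01_IM :: "(real \<Rightarrow> real) set set" where
  "P01_IM = M11 // ((reparam_rel \<union> reparam_rel\<inverse>)\<^sup>*)"

end

theory Submission
  imports Defs
begin

text \<open>Reparametrising by a homeomorphism preserves injectivity on [0,1], so injectivity is
  constant on each class of the coequalizer. The identity path is injective while the path
  \<open>t \<mapsto> min 1 (2t)\<close>, which is constant on [1/2,1], is not; hence they lie in different
  classes.\<close>

lemma inj_on_comp_homeomorphism_iff:
  assumes "homeomorphism S T \<phi> \<psi>" and "\<forall>t\<in>S. d t = c (\<phi> t)"
  shows "inj_on d S \<longleftrightarrow> inj_on c T"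
proof -
  have "inj_on \<phi> S" and "\<phi> ` S = T"
    using assms(1) homeomorphism_def by (metis inj_on_inverseI, metis)
  then have "inj_on c T \<longleftrightarrow> inj_on (c \<circ> \<phi>) S"
    using comp_inj_on_iff by blast
  also have "\<dots> \<longleftrightarrow> inj_on d S"
    using assms(2) by (intro inj_on_cong) simp
  finally show ?thesis ..
qed

lemma reparam_rel_inj_on_iff:
  assumes "(c, d) \<in> reparam_rel"
  shows "inj_on c {0..1} \<longleftrightarrow> inj_on d {0..1}"
  using assms inj_on_comp_homeomorphism_iff
  unfolding reparam_rel_def G11_def by blast

lemma rtrancl_sym_closure_invariant:
  assumes "(x, y) \<in> (R \<union> R\<inverse>)\<^sup>*" and "\<And>a b. (a, b) \<in> R \<Longrightarrow> P a \<longleftrightarrow> P b"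
  shows "P x \<longleftrightarrow> P y"
  using assms(1) by induction (use assms(2) in blast)+

lemma quotient_rtrancl_singleton_related:
  assumes "A // r\<^sup>* = {p}" and "x \<in> A" and "y \<in> A"
  shows "(x, y) \<in> r\<^sup>*"
proof -
  have "r\<^sup>* `` {x} = r\<^sup>* `` {y}"
    using quotientI[OF assms(2), of "r\<^sup>*"] quotientI[OF assms(3), of "r\<^sup>*"]
    unfolding assms(1) by simp
  moreover have "y \<in> r\<^sup>* `` {y}" by simp
  ultimately have "y \<in> r\<^sup>* `` {x}" by (simp only:)
  then show ?thesis by (rule ImageE) simp
qed

lemma id_in_M11: "(\<lambda>t. t) \<in> M11"
  unfolding M11_def by (auto simp: mono_on_def)

lemma min_one_double_in_M11: "(\<lambda>t. min 1 (2 * t)) \<in> M11"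
proof -
  have "{0..1} \<subseteq> (\<lambda>t::real. min 1 (2 * t)) ` {0..1}"
  proof
    fix y :: real
    assume "y \<in> {0..1}"
    then have "y = min 1 (2 * (y / 2))" and "y / 2 \<in> {0..1}" by auto
    then show "y \<in> (\<lambda>t. min 1 (2 * t)) ` {0..1}" by blast
  qed
  moreover have "(\<lambda>t::real. min 1 (2 * t)) ` {0..1} \<subseteq> {0..1}" by auto
  moreover have "continuous_on {0..1} (\<lambda>t::real. min 1 (2 * t))"
    by (intro continuous_intros)
  moreover have "mono_on {0..1} (\<lambda>t::real. min 1 (2 * t))" by (auto simp: mono_on_def)
  ultimately show ?thesis
    unfolding M11_def by blast
qed

lemma min_one_double_not_inj_on: "\<not> inj_on (\<lambda>t::real. min 1 (2 * t)) {0..1}"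
proof
  assume "inj_on (\<lambda>t::real. min 1 (2 * t)) {0..1}"
  then have "(1::real) = 1 / 2" by (rule inj_onD) auto
  then show False by simp
qed

theorem proposition3p7:
  shows "\<not> (\<exists>p. P01_IM = {p})"
proof
  assume "\<exists>p. P01_IM = {p}"
  then have "((\<lambda>t. t), (\<lambda>t. min 1 (2 * t))) \<in> (reparam_rel \<union> reparam_rel\<inverse>)\<^sup>*"
    unfolding P01_IM_def
    using quotient_rtrancl_singleton_related id_in_M11 min_one_double_in_M11 by metis
  then have "inj_on (\<lambda>t::real. t) {0..1} \<longleftrightarrow> inj_on (\<lambda>t::real. min 1 (2 * t)) {0..1}"
    by (rule rtrancl_sym_closure_invariant) (rule reparam_rel_inj_on_iff)
  then show False
    using min_one_double_not_inj_on by simp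
qed

end
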